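(* Let $\alpha>0$, $t_0>0$, $x_0,v_0\in\mathcal H$, and let $x$ be a solution of the Cauchy problem $$\tfrac{\alpha}{t}\dot x(t)+\operatorname{proj}_{C(x(t))+\ddot x(t)}(0)=0\ (t>t_0),\qquad x(t_0)=x_0,\ \dot x(t_0)=v_0 .$$ Let $z\in\mathcal H$, $\lambda\ge0$ with $\alpha\ge\lambda+1$, and $\xi^*=\lambda(\alpha-1-\lambda)$. For $i=1,\dots,m$ define $$\mathcal E_{i,\lambda,\xi^*}(t)=t^2\big(f_i(x(t))-f_i(z)\big)+\tfrac12\|\lambda(x(t)-z)+t\dot x(t)\|^2+\tfrac{\xi^*}{2}\|x(t)-z\|^2 .$$ Then for all $i$ and almost all $t\in[t_0,+\infty)$, $$\tfrac{d}{dt}\mathcal E_{i,\lambda,\xi^*}(t)\le 2t\big(f_i(x(t))-f_i(z)\big)-t\lambda\min_{j=1,\dots,m}\big(f_j(x(t))-f_j(z)\big)+t(\lambda+1-\alpha)\|\dot x(t)\|^2 .$$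
   Context: $\mathcal H$ is a real Hilbert space. $f_1,\dots,f_m:\mathcal H\to\mathbb R$ are convex and continuously differentiable. $C(x)=\operatorname{co}\{\nabla f_i(x):i=1,\dots,m\}$. For a closed convex $K$, $\operatorname{proj}_K(y)=\arg\min_{w\in K}\|w-y\|^2$. A solution of the Cauchy problem is a function $x:[t_0,+\infty)\to\mathcal H$ such that: $x\in C^1([t_0,+\infty))$; $\dot x$ is absolutely continuous on $[t_0,T]$ for every $T\ge t_0$; there is a Bochner measurable $\ddot x$ with $\dot x(t)=\dot x(t_0)+\int_{t_0}^t\ddot x(s)\,ds$ for all $t$, and $\frac{d}{dt}\dot x=\ddot x$ a.e.; the equation holds for almost all $t\ge t_0$; and the initial conditions hold. *)

theory Defs
  imports "HOL-Analysis.Analysis"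
begin

definition proj :: "'a::real_inner set \<Rightarrow> 'a \<Rightarrow> 'a" where
  "proj K y = (THE w. w \<in> K \<and> (\<forall>u\<in>K. (norm (w - y))\<^sup>2 \<le> (norm (u - y))\<^sup>2))"

text \<open>C(x) = convex hull of the gradients of f_1, ..., f_m at x.\<close>
definition conv_grad :: "(nat \<Rightarrow> 'a::real_inner \<Rightarrow> 'a) \<Rightarrow> nat \<Rightarrow> 'a \<Rightarrow> 'a set" where
  "conv_grad grad m x = convex hull ((\<lambda>i. grad i x) ` {1..m})"

definition abs_cont_on :: "real \<Rightarrow> real \<Rightarrow> (real \<Rightarrow> 'b::real_normed_vector) \<Rightarrow> bool" where
  "abs_cont_on a b g \<longleftrightarrow>
     (\<forall>e>0. \<exists>d>0. \<forall>(n::nat) (u::nat \<Rightarrow> real) (v::nat \<Rightarrow> real).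
        (\<forall>k<n. a \<le> u k \<and> u k \<le> v k \<and> v k \<le> b) \<and>
        (\<forall>k<n. \<forall>l<n. k \<noteq> l \<longrightarrow> v k \<le> u l \<or> v l \<le> u k) \<and>
        (\<Sum>k<n. v k - u k) < d
        \<longrightarrow> (\<Sum>k<n. norm (g (v k) - g (u k))) < e)"

definition strongly_measurable :: "'m measure \<Rightarrow> ('m \<Rightarrow> 'b::real_normed_vector) \<Rightarrow> bool" where
  "strongly_measurable M g \<longleftrightarrow>
     (\<exists>s::nat \<Rightarrow> 'm \<Rightarrow> 'b. (\<forall>n. finite (s n ` space M) \<and> s n \<in> borel_measurable M) \<and>
        (AE y in M. (\<lambda>n. s n y) \<longlonglongrightarrow> g y))"

end

theory Submission
  imports Defs
begin

text \<open>
  The equation says that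
  \<open>p = -(\<alpha>/t) x'\<close> is the minimal-norm element of \<open>C(x) + x''\<close>, so
  \<open>x'' = -(\<alpha>/t) x' - c\<close> for some \<open>c \<in> C(x)\<close>. Substituting this into the
  derivative, the \<open>\<langle>x - z, x'\<rangle>\<close> terms cancel thanks to the choice of \<open>\<xi>*\<close>, and
  what remains is bounded by two inequalities: the variational inequality of the
  projection gives \<open>\<langle>x', \<nabla>f\<^sub>i(x) - c\<rangle> \<le> 0\<close>, and convexity of every \<open>f\<^sub>j\<close>
  gives \<open>\<langle>x - z, c\<rangle> \<ge> min\<^sub>j (f\<^sub>j(x) - f\<^sub>j(z))\<close> for every \<open>c \<in> C(x)\<close>.
\<close>

definition energy ::
    "('a::real_inner \<Rightarrow> real) \<Rightarrow> (real \<Rightarrow> 'a) \<Rightarrow> (real \<Rightarrow> 'a) \<Rightarrow> 'a \<Rightarrow> real \<Rightarrow> real \<Rightarrow> real \<Rightarrow> real"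
  where "energy g x x' z lam xi s =
    s\<^sup>2 * (g (x s) - g z) + 1/2 * (norm (lam *\<^sub>R (x s - z) + s *\<^sub>R x' s))\<^sup>2
      + xi / 2 * (norm (x s - z))\<^sup>2"

lemma convex_on_gradient_inequality:
  fixes f :: "'a::real_inner \<Rightarrow> real"
  assumes cvx: "convex_on UNIV f" and deriv: "(f has_derivative (\<lambda>h. g \<bullet> h)) (at y)"
  shows "g \<bullet> (z - y) \<le> f z - f y"
proof -
  define \<phi> where "\<phi> = (\<lambda>s::real. f (y + s *\<^sub>R (z - y)))"
  have "convex_on UNIV \<phi>"
  proof (rule convex_onI)
    fix t a b :: real assume "0 < t" "t < 1"
    have "y + ((1 - t) * a + t * b) *\<^sub>R (z - y)
        = (1 - t) *\<^sub>R (y + a *\<^sub>R (z - y)) + t *\<^sub>R (y + b *\<^sub>R (z - y))"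
      by (simp add: algebra_simps)
    then show "\<phi> ((1 - t) *\<^sub>R a + t *\<^sub>R b) \<le> (1 - t) * \<phi> a + t * \<phi> b"
      unfolding \<phi>_def using convex_onD[OF cvx, of t] \<open>0 < t\<close> \<open>t < 1\<close> by simp
  qed simp
  moreover have "(\<phi> has_field_derivative (g \<bullet> (z - y))) (at 0)"
  proof -
    have "((\<lambda>s. y + s *\<^sub>R (z - y)) has_derivative (\<lambda>h. h *\<^sub>R (z - y))) (at 0)"
      by (auto intro!: derivative_eq_intros)
    from has_derivative_compose[OF this, of f "\<lambda>h. g \<bullet> h"] deriv
    have "(\<phi> has_derivative (\<lambda>h. h * (g \<bullet> (z - y)))) (at 0)"
      by (simp add: \<phi>_def)
    then show ?thesis
      unfolding has_field_derivative_def by (rule has_derivative_eq_rhs) (simp add: fun_eq_iff)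
  qed
  ultimately have "g \<bullet> (z - y) * (1 - 0) \<le> \<phi> 1 - \<phi> 0"
    by (intro convex_on_imp_above_tangent) auto
  then show ?thesis by (simp add: \<phi>_def)
qed

lemma proj_in_and_obtuse:
  fixes K :: "'a::real_inner set"
  assumes "convex K" "compact K" "K \<noteq> {}"
  shows "proj K y \<in> K" and "\<forall>u\<in>K. (y - proj K y) \<bullet> (u - proj K y) \<le> 0"
proof -
  have closest_iff: "(\<forall>u\<in>K. (norm (w - y))\<^sup>2 \<le> (norm (u - y))\<^sup>2) \<longleftrightarrow> (\<forall>u\<in>K. dist y w \<le> dist y u)"
    for w by (simp add: dist_norm norm_minus_commute)
  have "continuous_on K (dist y)" by (intro continuous_intros)
  with assms(2,3) obtain w where w: "w \<in> K" "\<forall>u\<in>K. dist y w \<le> dist y u"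
    using continuous_attains_inf by blast
  have "proj K y = w"
    unfolding proj_def closest_iff
    using w any_closest_point_unique[OF assms(1) compact_imp_closed[OF assms(2)]]
    by (intro the_equality) auto
  then show "proj K y \<in> K" "\<forall>u\<in>K. (y - proj K y) \<bullet> (u - proj K y) \<le> 0"
    using w any_closest_point_dot[OF assms(1) compact_imp_closed[OF assms(2)]] by auto
qed

lemma conv_grad_lower_bound:
  assumes f_convex: "\<forall>j\<in>{1..m}. convex_on UNIV (f j)"
    and f_grad: "\<forall>j\<in>{1..m}. \<forall>y. (f j has_derivative (\<lambda>h. grad j y \<bullet> h)) (at y)"
    and c: "c \<in> conv_grad grad m y"
  shows "Min ((\<lambda>j. f j y - f j z) ` {1..m}) \<le> (y - z) \<bullet> c"
proof -
  let ?M = "Min ((\<lambda>j. f j y - f j z) ` {1..m})"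
  have "grad j y \<in> {g. ?M \<le> (y - z) \<bullet> g}" if j: "j \<in> {1..m}" for j
  proof -
    have "?M \<le> f j y - f j z" using j by (intro Min_le) auto
    also have "\<dots> \<le> grad j y \<bullet> (y - z)"
      using convex_on_gradient_inequality[of "f j" "grad j y" y z] f_convex f_grad j
      by (simp add: inner_diff_right)
    finally show ?thesis by (simp add: inner_commute)
  qed
  then have "conv_grad grad m y \<subseteq> {g. ?M \<le> (y - z) \<bullet> g}"
    unfolding conv_grad_def by (intro hull_minimal convex_halfspace_ge) auto
  with c show ?thesis by auto
qed

lemma energy_has_derivative:
  assumes "(x has_vector_derivative V) (at t)" and "(x' has_vector_derivative A) (at t)"
    and "(g has_derivative (\<lambda>h. G \<bullet> h)) (at (x t))"
  shows "(energy g x x' z lam xi has_real_derivative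
           2 * t * (g (x t) - g z) + t\<^sup>2 * (G \<bullet> V)
           + (lam *\<^sub>R (x t - z) + t *\<^sub>R x' t) \<bullet> (lam *\<^sub>R V + x' t + t *\<^sub>R A)
           + xi * ((x t - z) \<bullet> V)) (at t)"
proof -
  have dx: "(x has_derivative (\<lambda>h. h *\<^sub>R V)) (at t)"
    and dx': "(x' has_derivative (\<lambda>h. h *\<^sub>R A)) (at t)"
    using assms(1,2) by (simp_all add: has_vector_derivative_def)
  have dg: "((\<lambda>s. g (x s)) has_derivative (\<lambda>h. G \<bullet> (h *\<^sub>R V))) (at t)"
    using has_derivative_compose[OF dx assms(3)] by simp
  show ?thesis
    unfolding energy_def[abs_def] power2_norm_eq_inner has_field_derivative_def
    by (rule has_derivative_eq_rhs, (rule derivative_eq_intros dx dx' dg | simp)+)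
      (simp add: fun_eq_iff inner_add_left inner_add_right inner_diff_left inner_diff_right
         inner_commute field_simps)
qed

lemma energy_derivative_bound:
  fixes f :: "nat \<Rightarrow> 'a::real_inner \<Rightarrow> real"
  assumes f_convex: "\<forall>j\<in>{1..m}. convex_on UNIV (f j)"
    and f_grad: "\<forall>j\<in>{1..m}. \<forall>y. (f j has_derivative (\<lambda>h. grad j y \<bullet> h)) (at y)"
    and i: "i \<in> {1..m}" and \<alpha>: "\<alpha> > 0" and t: "t > 0" and lam: "lam \<ge> 0"
    and x_deriv: "(x has_vector_derivative x' t) (at t)"
    and x'_deriv: "(x' has_vector_derivative A) (at t)"
    and eq: "(\<alpha> / t) *\<^sub>R x' t + proj ((\<lambda>c. c + A) ` conv_grad grad m (x t)) 0 = 0"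
  shows "\<exists>D. (energy (f i) x x' z lam (lam * (\<alpha> - 1 - lam)) has_real_derivative D) (at t)
           \<and> D \<le> 2 * t * (f i (x t) - f i z)
                  - t * lam * Min ((\<lambda>j. f j (x t) - f j z) ` {1..m})
                  + t * (lam + 1 - \<alpha>) * (norm (x' t))\<^sup>2"
proof -
  define V where "V = x' t"
  define X where "X = x t - z"
  define G where "G = grad i (x t)"
  define S where "S = conv_grad grad m (x t)"
  define p where "p = proj ((\<lambda>c. c + A) ` S) 0"
  have G_in_S: "G \<in> S"
    unfolding G_def S_def conv_grad_def using i by (intro hull_inc) auto
  let ?K = "(\<lambda>c. c + A) ` S"
  have "convex ?K" "compact ?K"
    using finite_imp_compact_convex_hull[of "(\<lambda>j. grad j (x t)) ` {1..m}"]
    unfolding S_def conv_grad_def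
    by (auto simp: add.commute[of _ A] intro: convex_translation compact_translation)
  moreover have "?K \<noteq> {}"
    using G_in_S by blast
  ultimately have "p \<in> ?K" and obtuse: "\<forall>u\<in>?K. (0 - p) \<bullet> (u - p) \<le> 0"
    using proj_in_and_obtuse[of ?K 0] unfolding p_def by auto
  then obtain c where c: "c \<in> S" "p = c + A"
    by blast
  have "(0 - p) \<bullet> ((G + A) - p) \<le> 0"
    using obtuse G_in_S by blast
  then have "0 \<le> p \<bullet> (G - c)"
    by (simp add: c(2) inner_diff_right inner_diff_left inner_add_left)
  have p: "p = - (\<alpha> / t) *\<^sub>R V"
    using eq unfolding p_def S_def V_def by (simp add: eq_neg_iff_add_eq_0 add.commute)
  have descent: "V \<bullet> (G - c) \<le> 0"
    using \<open>0 \<le> p \<bullet> (G - c)\<close> \<alpha> t by (simp add: p divide_le_0_iff mult_le_0_iff)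
  have lower: "Min ((\<lambda>j. f j (x t) - f j z) ` {1..m}) \<le> X \<bullet> c"
    using conv_grad_lower_bound[OF f_convex f_grad] c unfolding S_def X_def by blast
  define \<xi> where "\<xi> = lam * (\<alpha> - 1 - lam)"
  have "t *\<^sub>R p = - \<alpha> *\<^sub>R V"
    using p t by simp
  then have tA: "t *\<^sub>R A = - \<alpha> *\<^sub>R V - t *\<^sub>R c"
    using c(2) by (simp add: algebra_simps)
  have Y: "lam *\<^sub>R x' t + x' t + t *\<^sub>R A = (lam + 1 - \<alpha>) *\<^sub>R V - t *\<^sub>R c"
    unfolding tA by (simp add: V_def algebra_simps)
  have "(f i has_derivative (\<lambda>h. G \<bullet> h)) (at (x t))"
    using f_grad i by (simp add: G_def)
  from energy_has_derivative[OF x_deriv x'_deriv this, of z lam \<xi>, unfolded Y]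
  have "(energy (f i) x x' z lam \<xi> has_real_derivative
      2 * t * (f i (x t) - f i z) + t\<^sup>2 * (G \<bullet> V)
      + (lam *\<^sub>R X + t *\<^sub>R V) \<bullet> ((lam + 1 - \<alpha>) *\<^sub>R V - t *\<^sub>R c) + \<xi> * (X \<bullet> V)) (at t)"
    by (simp only: X_def V_def)
  also have "2 * t * (f i (x t) - f i z) + t\<^sup>2 * (G \<bullet> V)
      + (lam *\<^sub>R X + t *\<^sub>R V) \<bullet> ((lam + 1 - \<alpha>) *\<^sub>R V - t *\<^sub>R c) + \<xi> * (X \<bullet> V)
    = 2 * t * (f i (x t) - f i z) + t\<^sup>2 * (V \<bullet> (G - c)) - t * lam * (X \<bullet> c)
      + t * (lam + 1 - \<alpha>) * (norm V)\<^sup>2"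
    by (simp add: \<xi>_def inner_add_left inner_diff_left inner_diff_right inner_commute
        power2_norm_eq_inner algebra_simps power2_eq_square[of t])
  finally have deriv: "(energy (f i) x x' z lam (lam * (\<alpha> - 1 - lam)) has_real_derivative
      2 * t * (f i (x t) - f i z) + t\<^sup>2 * (V \<bullet> (G - c)) - t * lam * (X \<bullet> c)
      + t * (lam + 1 - \<alpha>) * (norm V)\<^sup>2) (at t)"
    unfolding \<xi>_def .
  have "t\<^sup>2 * (V \<bullet> (G - c)) \<le> 0"
    using descent by (simp add: mult_nonneg_nonpos)
  moreover have "t * lam * Min ((\<lambda>j. f j (x t) - f j z) ` {1..m}) \<le> t * lam * (X \<bullet> c)"
    using lower t lam by (simp add: mult_left_mono)
  ultimately show ?thesis
    using deriv unfolding V_def by (intro exI conjI) (assumption, linarith)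
qed

theorem lemma4p11:
  fixes f :: "nat \<Rightarrow> 'a::{real_inner, complete_space} \<Rightarrow> real"
    and grad :: "nat \<Rightarrow> 'a \<Rightarrow> 'a"
    and m :: nat
    and x x' x'' :: "real \<Rightarrow> 'a"
    and \<alpha> t0 lam :: real
    and x0 v0 z :: 'a
  assumes m: "m \<ge> 1"
    and f_convex: "\<forall>i\<in>{1..m}. convex_on UNIV (f i)"
    and f_grad: "\<forall>i\<in>{1..m}. \<forall>y. (f i has_derivative (\<lambda>h. grad i y \<bullet> h)) (at y)"
    and grad_cont: "\<forall>i\<in>{1..m}. continuous_on UNIV (grad i)"
    and \<alpha>: "\<alpha> > 0" and t0: "t0 > 0"
    \<comment> \<open>x is C^1 on [t0,+\<infinity>) with derivative x'\<close>
    and x_deriv: "\<forall>t\<ge>t0. (x has_vector_derivative x' t) (at t within {t0..})"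
    and x'_cont: "continuous_on {t0..} x'"
    \<comment> \<open>x' absolutely continuous on every [t0,T]\<close>
    and x'_ac: "\<forall>T\<ge>t0. abs_cont_on t0 T x'"
    \<comment> \<open>x'' Bochner measurable and x'(t) = x'(t0) + integral of x'' over [t0,t]\<close>
    and x''_meas: "strongly_measurable (restrict_space lborel {t0..}) x''"
    and x''_int: "\<forall>t\<ge>t0. (\<lambda>s. norm (x'' s)) integrable_on {t0..t}
                       \<and> (x'' has_integral (x' t - x' t0)) {t0..t}"
    and x''_deriv: "AE t in lborel. t > t0 \<longrightarrow> (x' has_vector_derivative x'' t) (at t)"
    \<comment> \<open>the equation, for almost all t > t0\<close>
    and eq: "AE t in lborel. t > t0 \<longrightarrow>
               (\<alpha> / t) *\<^sub>R x' t + proj ((\<lambda>c. c + x'' t) ` conv_grad grad m (x t)) 0 = 0"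
    and init: "x t0 = x0" "x' t0 = v0"
    and lam: "lam \<ge> 0" and \<alpha>_lam: "\<alpha> \<ge> lam + 1"
  shows "\<forall>i\<in>{1..m}. AE t in lborel. t \<ge> t0 \<longrightarrow>
           (\<exists>D. ((\<lambda>s. s\<^sup>2 * (f i (x s) - f i z)
                      + 1/2 * (norm (lam *\<^sub>R (x s - z) + s *\<^sub>R x' s))\<^sup>2
                      + (lam * (\<alpha> - 1 - lam)) / 2 * (norm (x s - z))\<^sup>2)
                  has_real_derivative D) (at t within {t0..})
              \<and> D \<le> 2 * t * (f i (x t) - f i z)
                     - t * lam * Min ((\<lambda>j. f j (x t) - f j z) ` {1..m})
                     + t * (lam + 1 - \<alpha>) * (norm (x' t))\<^sup>2)"
proof (intro ballI, goal_cases)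
  case (1 i)
  from AE_lborel_singleton[of t0] x''_deriv eq show ?case
  proof eventually_elim
    case (elim t)
    show ?case
    proof (cases "t > t0")
      case True
      then have at_t: "at t within {t0..} = at t"
        by (intro at_within_interior) simp
      have "(x has_vector_derivative x' t) (at t)"
        using x_deriv less_imp_le[OF True] unfolding at_t[symmetric] by blast
      moreover have "t > 0"
        using t0 True by linarith
      ultimately show ?thesis
        using energy_derivative_bound[where x = x and x' = x' and t = t and A = "x'' t" and z = z,
            OF f_convex f_grad \<open>i \<in> {1..m}\<close> \<alpha> _ lam _
            elim(2)[rule_format, OF True] elim(3)[rule_format, OF True]]
        unfolding energy_def[abs_def] at_t by (intro impI)
    qed (use elim in auto)
  qed
qed

end
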